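(* Let $L:\mathbb{R}^d\setminus\{0\}\to\mathbb{R}$ be twice differentiable and scale invariant, and $\rho:=\max_{\|x\|_2=1}\|\nabla^2L(x)\|_2<\infty$. For any $x\in\mathbb{R}^d\setminus\{0\}$ and $v\in\mathbb{R}^d$ with $\langle x,v\rangle=0$, $$L(x+v)-L(x)\le\langle v,\nabla L(x)\rangle+\frac{\rho\|v\|_2^2}{2\|x\|_2^2}.$$
   Context: Scale invariant means $L(cx)=L(x)$ for all $c>0$ and $x\ne0$. *)

theory Defs
  imports "HOL-Analysis.Analysis"
begin

definition scale_invariant :: "('a::real_vector \<Rightarrow> real) \<Rightarrow> bool" where
  "scale_invariant L \<longleftrightarrow> (\<forall>c::real. \<forall>x. c > 0 \<longrightarrow> x \<noteq> 0 \<longrightarrow> L (c *\<^sub>R x) = L x)"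

end

theory Submission
  imports Defs
begin

text \<open>Differentiating the identity \<open>L (c x) = L x\<close> shows that the gradient is homogeneous of
degree \<open>-1\<close> and the Hessian homogeneous of degree \<open>-2\<close>. Hence on the ray through any \<open>y\<close> the
Hessian has operator norm at most \<open>\<rho> / \<parallel>y\<parallel>\<^sup>2\<close>. Along the segment \<open>x + t v\<close> with \<open>v \<perp> x\<close> one has
\<open>\<parallel>x + t v\<parallel> \<ge> \<parallel>x\<parallel>\<close>, so the second derivative of \<open>t \<mapsto> L (x + t v)\<close> is bounded by
\<open>\<rho> \<parallel>v\<parallel>\<^sup>2 / \<parallel>x\<parallel>\<^sup>2\<close>, and the claim is the second-order Taylor bound on \<open>[0, 1]\<close>.\<close>

lemma second_order_upper_bound:
  fixes f f' f'' :: "real \<Rightarrow> real"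
  assumes f: "\<And>t. 0 \<le> t \<Longrightarrow> t \<le> 1 \<Longrightarrow> (f has_real_derivative f' t) (at t)"
    and f': "\<And>t. 0 \<le> t \<Longrightarrow> t \<le> 1 \<Longrightarrow> (f' has_real_derivative f'' t) (at t)"
    and K: "\<And>t. 0 \<le> t \<Longrightarrow> t \<le> 1 \<Longrightarrow> f'' t \<le> K"
  shows "f 1 - f 0 \<le> f' 0 + K / 2"
proof -
  have f'_le: "f' t - f' 0 \<le> t * K" if t: "0 \<le> t" "t \<le> 1" for t
  proof -
    have "(\<lambda>s. s * K - f' s) 0 \<le> (\<lambda>s. s * K - f' s) t"
    proof (rule DERIV_nonneg_imp_nondecreasing[OF t(1)])
      fix s assume "0 \<le> s" "s \<le> t"
      with t show "\<exists>y. ((\<lambda>s. s * K - f' s) has_real_derivative y) (at s) \<and> 0 \<le> y"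
        by (intro exI[of _ "K - f'' s"]) (auto intro!: derivative_eq_intros f' K)
    qed
    then show ?thesis by simp
  qed
  define g where "g t = f t - t * f' 0 - t\<^sup>2 / 2 * K" for t
  have "g 1 \<le> g 0"
  proof (rule DERIV_nonpos_imp_nonincreasing[of 0 1])
    fix s :: real assume s: "0 \<le> s" "s \<le> 1"
    show "\<exists>y. (g has_real_derivative y) (at s) \<and> y \<le> 0"
    proof (intro exI conjI)
      show "(g has_real_derivative (f' s - f' 0 - s * K)) (at s)"
        unfolding g_def[abs_def]
        by (auto intro!: derivative_eq_intros f s simp: power2_eq_square)
      show "f' s - f' 0 - s * K \<le> 0"
        using f'_le[OF s] by simp
    qed
  qed simp
  then show ?thesis by (simp add: g_def)
qed

lemma has_real_derivative_along_line:
  fixes f :: "'a::real_normed_vector \<Rightarrow> real"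
  assumes "(f has_derivative f') (at (x + t *\<^sub>R v))"
  shows "((\<lambda>s. f (x + s *\<^sub>R v)) has_real_derivative f' v) (at t)"
proof -
  have "((\<lambda>s. x + s *\<^sub>R v) has_derivative (\<lambda>s. s *\<^sub>R v)) (at t)"
    by (auto intro!: derivative_eq_intros)
  from has_derivative_compose[OF this assms]
  have "((\<lambda>s. f (x + s *\<^sub>R v)) has_derivative (\<lambda>s. s * f' v)) (at t)"
    using linear_cmul[OF has_derivative_linear[OF assms]] by simp
  then show ?thesis
    by (simp add: has_field_derivative_def mult.commute[of _ "f' v"])
qed

lemma scale_invariant_gradient_homogeneous:
  fixes L :: "'a::euclidean_space \<Rightarrow> real" and G :: "'a \<Rightarrow> 'a"
  assumes grad: "\<And>y. y \<noteq> 0 \<Longrightarrow> (L has_derivative (\<lambda>h. G y \<bullet> h)) (at y)"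
    and scinv: "scale_invariant L" and c: "c > 0" and y: "y \<noteq> 0"
  shows "G (c *\<^sub>R y) = (1 / c) *\<^sub>R G y"
proof -
  have "((\<lambda>z. L (c *\<^sub>R z)) has_derivative (\<lambda>h. G (c *\<^sub>R y) \<bullet> (c *\<^sub>R h))) (at y)"
    using c y by (intro has_derivative_compose[OF _ grad]) (auto intro!: derivative_eq_intros)
  moreover have "((\<lambda>z. L (c *\<^sub>R z)) has_derivative (\<lambda>h. G y \<bullet> h)) (at y)"
  proof (rule has_derivative_transform_within_open[OF grad[OF y], of "- {0}"])
    fix z :: 'a assume "z \<in> - {0}"
    then show "L z = L (c *\<^sub>R z)" using scinv c unfolding scale_invariant_def by auto
  qed (use y in auto)
  ultimately have "G (c *\<^sub>R y) \<bullet> (c *\<^sub>R h) = G y \<bullet> h" for h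
    by (metis has_derivative_unique)
  then have "(c *\<^sub>R G (c *\<^sub>R y) - G y) \<bullet> h = 0" for h
    by (simp add: inner_diff_left)
  then have "c *\<^sub>R G (c *\<^sub>R y) = G y"
    by (metis inner_eq_zero_iff eq_iff_diff_eq_0)
  then have "(1 / c) *\<^sub>R (c *\<^sub>R G (c *\<^sub>R y)) = (1 / c) *\<^sub>R G y" by simp
  then show ?thesis using c by simp
qed

lemma scale_invariant_hessian_homogeneous:
  fixes L :: "'a::euclidean_space \<Rightarrow> real" and G :: "'a \<Rightarrow> 'a"
  assumes grad: "\<And>y. y \<noteq> 0 \<Longrightarrow> (L has_derivative (\<lambda>h. G y \<bullet> h)) (at y)"
    and hess: "\<And>y. y \<noteq> 0 \<Longrightarrow> (G has_derivative H y) (at y)"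
    and scinv: "scale_invariant L" and c: "c > 0" and y: "y \<noteq> 0"
  shows "H (c *\<^sub>R y) h = (1 / c\<^sup>2) *\<^sub>R H y h"
proof -
  have "((\<lambda>z. G (c *\<^sub>R z)) has_derivative (\<lambda>h. H (c *\<^sub>R y) (c *\<^sub>R h))) (at y)"
    using c y by (intro has_derivative_compose[OF _ hess]) (auto intro!: derivative_eq_intros)
  moreover have "((\<lambda>z. G (c *\<^sub>R z)) has_derivative (\<lambda>h. (1 / c) *\<^sub>R H y h)) (at y)"
  proof (rule has_derivative_transform_within_open[OF has_derivative_scaleR_right[OF hess[OF y]],
        of "- {0}"])
    fix z :: 'a assume "z \<in> - {0}"
    then show "(1 / c) *\<^sub>R G z = G (c *\<^sub>R z)"
      using scale_invariant_gradient_homogeneous[OF grad scinv c] by auto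
  qed (use y in auto)
  ultimately have scaled: "H (c *\<^sub>R y) (c *\<^sub>R k) = (1 / c) *\<^sub>R H y k" for k
    by (metis has_derivative_unique)
  have "H (c *\<^sub>R y) h = H (c *\<^sub>R y) (c *\<^sub>R ((1 / c) *\<^sub>R h))" using c by simp
  also have "\<dots> = (1 / c) *\<^sub>R H y ((1 / c) *\<^sub>R h)" by (rule scaled)
  also have "\<dots> = (1 / c\<^sup>2) *\<^sub>R H y h"
    using linear_cmul[OF has_derivative_linear[OF hess[OF y]]] by (simp add: power2_eq_square)
  finally show ?thesis .
qed

lemma scale_invariant_hessian_bound:
  fixes L :: "'a::euclidean_space \<Rightarrow> real" and G :: "'a \<Rightarrow> 'a"
  assumes grad: "\<And>y. y \<noteq> 0 \<Longrightarrow> (L has_derivative (\<lambda>h. G y \<bullet> h)) (at y)"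
    and hess: "\<And>y. y \<noteq> 0 \<Longrightarrow> (G has_derivative H y) (at y)"
    and scinv: "scale_invariant L"
    and sphere_bound: "\<And>u. norm u = 1 \<Longrightarrow> onorm (H u) \<le> \<rho>"
    and y: "y \<noteq> 0"
  shows "norm (H y h) \<le> \<rho> / (norm y)\<^sup>2 * norm h"
proof -
  define u where "u = (1 / norm y) *\<^sub>R y"
  have u: "norm u = 1" using y by (simp add: u_def)
  then have "u \<noteq> 0" by auto
  have "H y h = (1 / (norm y)\<^sup>2) *\<^sub>R H u h"
    using scale_invariant_hessian_homogeneous[OF grad hess scinv _ \<open>u \<noteq> 0\<close>, of "norm y" h] y
    by (simp add: u_def)
  then have "norm (H y h) = norm (H u h) / (norm y)\<^sup>2" by simp
  also have "\<dots> \<le> onorm (H u) * norm h / (norm y)\<^sup>2"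
    by (intro divide_right_mono onorm has_derivative_bounded_linear[OF hess] \<open>u \<noteq> 0\<close>) simp
  also have "\<dots> \<le> \<rho> * norm h / (norm y)\<^sup>2"
    by (intro divide_right_mono mult_right_mono sphere_bound u) auto
  finally show ?thesis by simp
qed

lemma norm_le_norm_add_orthogonal:
  fixes x w :: "'a::real_inner"
  assumes "x \<bullet> w = 0"
  shows "norm x \<le> norm (x + w)"
proof -
  have "(norm x)\<^sup>2 \<le> (norm (x + w))\<^sup>2"
    using assms norm_add_Pythagorean[of x w] by (simp add: orthogonal_def)
  then show ?thesis by simp
qed

lemma scale_invariant_hessian_bound_orthogonal_line:
  fixes L :: "'a::euclidean_space \<Rightarrow> real" and G :: "'a \<Rightarrow> 'a"
  assumes grad: "\<And>y. y \<noteq> 0 \<Longrightarrow> (L has_derivative (\<lambda>h. G y \<bullet> h)) (at y)"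
    and hess: "\<And>y. y \<noteq> 0 \<Longrightarrow> (G has_derivative H y) (at y)"
    and scinv: "scale_invariant L"
    and sphere_bound: "\<And>u. norm u = 1 \<Longrightarrow> onorm (H u) \<le> \<rho>"
    and x: "x \<noteq> 0" and orth: "x \<bullet> v = 0"
  shows "H (x + t *\<^sub>R v) v \<bullet> v \<le> \<rho> * (norm v)\<^sup>2 / (norm x)\<^sup>2"
proof -
  obtain b :: 'a where "b \<in> Basis" using nonempty_Basis by blast
  then have "0 \<le> \<rho>"
    using sphere_bound[of b] onorm_pos_le[OF has_derivative_bounded_linear[OF hess[of b]]]
    by fastforce
  have "norm x \<le> norm (x + t *\<^sub>R v)"
    using orth by (intro norm_le_norm_add_orthogonal) simp
  with x have "x + t *\<^sub>R v \<noteq> 0" by auto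
  have "H (x + t *\<^sub>R v) v \<bullet> v \<le> norm (H (x + t *\<^sub>R v) v) * norm v"
    by (metis Cauchy_Schwarz_ineq2 abs_le_iff)
  also have "\<dots> \<le> \<rho> / (norm (x + t *\<^sub>R v))\<^sup>2 * norm v * norm v"
    by (intro mult_right_mono scale_invariant_hessian_bound[OF grad hess scinv sphere_bound]
        \<open>x + t *\<^sub>R v \<noteq> 0\<close>) auto
  also have "\<dots> \<le> \<rho> / (norm x)\<^sup>2 * norm v * norm v"
    using x \<open>0 \<le> \<rho>\<close> \<open>norm x \<le> norm (x + t *\<^sub>R v)\<close> \<open>x + t *\<^sub>R v \<noteq> 0\<close>
    by (intro mult_right_mono divide_left_mono power_mono) auto
  finally show ?thesis by (simp add: power2_eq_square)
qed

theorem mainTheorem4: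
  fixes L :: "'a::euclidean_space \<Rightarrow> real"
    and G :: "'a \<Rightarrow> 'a"
    and H :: "'a \<Rightarrow> 'a \<Rightarrow> 'a"
    and \<rho> :: real and x v :: 'a
  assumes grad: "\<And>y. y \<noteq> 0 \<Longrightarrow> (L has_derivative (\<lambda>h. G y \<bullet> h)) (at y)"
    and hess: "\<And>y. y \<noteq> 0 \<Longrightarrow> (G has_derivative H y) (at y)"
    and scinv: "scale_invariant L"
    and bdd: "bdd_above ((\<lambda>y. onorm (H y)) ` sphere 0 1)"
    and rho: "\<rho> = (SUP y\<in>sphere 0 1. onorm (H y))"
    and x: "x \<noteq> 0"
    and orth: "x \<bullet> v = 0"
  shows "L (x + v) - L x \<le> v \<bullet> G x + \<rho> * (norm v)\<^sup>2 / (2 * (norm x)\<^sup>2)"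
proof -
  have sphere_bound: "onorm (H u) \<le> \<rho>" if "norm u = 1" for u
    unfolding rho by (rule cSUP_upper[OF _ bdd]) (use that in simp)
  have line_nonzero: "x + t *\<^sub>R v \<noteq> 0" for t
    using x norm_le_norm_add_orthogonal[of x "t *\<^sub>R v"] orth by auto
  have "((\<lambda>s. L (x + s *\<^sub>R v)) has_real_derivative G (x + t *\<^sub>R v) \<bullet> v) (at t)" for t
    using has_real_derivative_along_line[OF grad[OF line_nonzero]] .
  moreover have "((\<lambda>s. G (x + s *\<^sub>R v) \<bullet> v) has_real_derivative H (x + t *\<^sub>R v) v \<bullet> v) (at t)"
    for t
    by (rule has_real_derivative_along_line[where f' = "\<lambda>h. H (x + t *\<^sub>R v) h \<bullet> v"])
      (auto intro!: derivative_eq_intros hess line_nonzero)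
  ultimately have "L (x + 1 *\<^sub>R v) - L (x + 0 *\<^sub>R v)
      \<le> G (x + 0 *\<^sub>R v) \<bullet> v + \<rho> * (norm v)\<^sup>2 / (norm x)\<^sup>2 / 2"
    by (intro second_order_upper_bound[where f'' = "\<lambda>t. H (x + t *\<^sub>R v) v \<bullet> v"]
        scale_invariant_hessian_bound_orthogonal_line[OF grad hess scinv sphere_bound x orth])
  then show ?thesis
    by (simp add: inner_commute)
qed

end
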